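(* Let $n,m,c\ge 1$, let $P=(V_P,E_P)$ be a graph, let $S\subseteq V_P$, and let $\phi: V_P\to\mathcal P(V(T(n,m,c)))$ be a feasible embedding of $P[S]$ into the Chimera graph $T(n,m,c)$. Define $\phi^\dagger: V_P\to\mathcal P(V(T(2n,2m,c)))$ by $$\phi^\dagger(v)=\bigcup_{(x,y,z)\in\phi(v)} \sigma(x,y,z),$$ where $\sigma(x,y,z)=\{(2x,2y,z),(2x+1,2y,z)\}$ if $0\le z\le c-1$, and $\sigma(x,y,z)=\{(2x,2y,z),(2x,2y+1,z)\}$ if $c\le z\le 2c-1$. Then $\phi^\dagger$ is a feasible embedding of $P[S]$ into $T(2n,2m,c)$.
   Context: Chimera graph $T(n,m,c)$: an $n\times m$ grid of unit cells, each a complete bipartite graph $K_{c,c}$. Its vertices are triples $(x,y,z)$ with $x\in\{0,\dots,n-1\}$ (row index), $y\in\{0,\dots,m-1\}$ (column index), $z\in\{0,\dots,2c-1\}$; vertices with $z\le c-1$ form the left partite set and those with $z\ge c$ the right partite set of cell $(x,y)$. Edges: $(x,y,z)\sim(x,y,z')$ whenever $z\le c-1<z'$ (the $K_{c,c}$ inside a cell); $(x,y,z)\sim(x+1,y,z)$ for $z\le c-1$ and $x+1\le n-1$ (left-partite vertices connect to the corresponding vertex in the adjacent cell of the same column); $(x,y,z)\sim(x,y+1,z)$ for $z\ge c$ and $y+1\le m-1$ (right-partite vertices connect to the corresponding vertex in the adjacent cell of the same row). For $S\subseteq V_P$, $P[S]$ is the subgraph of $P$ induced on $S$. A map $\phi: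 V_P\to\mathcal P(V_H)$ into a hardware graph $H$ is a feasible embedding of $P[S]$ into $H$ if: $\phi(v)=\emptyset$ for $v\notin S$ and $\phi(v)\neq\emptyset$ for $v\in S$; the sets (chains) $\phi(v)$, $v\in V_P$, are pairwise disjoint; each chain $\phi(v)$ induces a connected subgraph of $H$; and for every edge $(u,v)\in E_P$ with $u,v\in S$ there exist $a\in\phi(u)$, $b\in\phi(v)$ with $(a,b)$ an edge of $H$. *)

theory Defs
  imports Main
begin

type_synonym cvert = "nat \<times> nat \<times> nat"

definition chimera_verts :: "nat \<Rightarrow> nat \<Rightarrow> nat \<Rightarrow> cvert set" where
  "chimera_verts n m c = {(x,y,z). x < n \<and> y < m \<and> z < 2*c}"

definition chimera_edge0 :: "nat \<Rightarrow> nat \<Rightarrow> nat \<Rightarrow> cvert \<Rightarrow> cvert \<Rightarrow> bool" where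
  "chimera_edge0 n m c a b \<longleftrightarrow> a \<in> chimera_verts n m c \<and> b \<in> chimera_verts n m c \<and>
     (case a of (x,y,z) \<Rightarrow> case b of (x',y',z') \<Rightarrow>
        (x' = x \<and> y' = y \<and> z \<le> c - 1 \<and> c - 1 < z')
      \<or> (x' = x + 1 \<and> y' = y \<and> z' = z \<and> z \<le> c - 1)
      \<or> (x' = x \<and> y' = y + 1 \<and> z' = z \<and> z \<ge> c))"

definition chimera_adj :: "nat \<Rightarrow> nat \<Rightarrow> nat \<Rightarrow> cvert \<Rightarrow> cvert \<Rightarrow> bool" where
  "chimera_adj n m c a b \<longleftrightarrow> chimera_edge0 n m c a b \<or> chimera_edge0 n m c b a"

definition induces_connected :: "('a \<Rightarrow> 'a \<Rightarrow> bool) \<Rightarrow> 'a set \<Rightarrow> bool" where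
  "induces_connected H C \<longleftrightarrow>
     (\<forall>a\<in>C. \<forall>b\<in>C. (\<lambda>u w. u \<in> C \<and> w \<in> C \<and> H u w)\<^sup>*\<^sup>* a b)"

definition feasible_embedding ::
  "'v set \<Rightarrow> ('v \<times> 'v) set \<Rightarrow> 'v set \<Rightarrow> 'h set \<Rightarrow> ('h \<Rightarrow> 'h \<Rightarrow> bool) \<Rightarrow> ('v \<Rightarrow> 'h set) \<Rightarrow> bool" where
  "feasible_embedding VP EP S VH H \<phi> \<longleftrightarrow>
     (\<forall>v\<in>VP. \<phi> v \<subseteq> VH) \<and>
     (\<forall>v\<in>VP. v \<notin> S \<longrightarrow> \<phi> v = {}) \<and>
     (\<forall>v\<in>S. \<phi> v \<noteq> {}) \<and>
     (\<forall>u\<in>VP. \<forall>v\<in>VP. u \<noteq> v \<longrightarrow> \<phi> u \<inter> \<phi> v = {}) \<and>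
     (\<forall>v\<in>VP. induces_connected H (\<phi> v)) \<and>
     (\<forall>(u,v)\<in>EP. u \<in> S \<longrightarrow> v \<in> S \<longrightarrow> (\<exists>a\<in>\<phi> u. \<exists>b\<in>\<phi> v. H a b))"

definition sigma :: "nat \<Rightarrow> cvert \<Rightarrow> cvert set" where
  "sigma c p = (case p of (x,y,z) \<Rightarrow>
     if z \<le> c - 1 then {(2*x, 2*y, z), (2*x+1, 2*y, z)}
     else {(2*x, 2*y, z), (2*x, 2*y+1, z)})"

definition phi_dagger :: "nat \<Rightarrow> ('v \<Rightarrow> cvert set) \<Rightarrow> 'v \<Rightarrow> cvert set" where
  "phi_dagger c \<phi> v = (\<Union>p\<in>\<phi> v. sigma c p)"

end

theory Submission
  imports Defs
begin

text \<open>Each vertex of T(n,m,c) is replaced by two adjacent vertices of T(2n,2m,c), doubled along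
  the direction in which it has external couplers, so that every coupler of T(n,m,c) is reproduced
  between the images of its endpoints. Composing an embedding with such a vertex expansion keeps
  chains nonempty, disjoint and connected and preserves the realised edges.\<close>

lemma induces_connected_mono:
  assumes "induces_connected H C" "C \<subseteq> D" "a \<in> C" "b \<in> C"
  shows "(\<lambda>u w. u \<in> D \<and> w \<in> D \<and> H u w)\<^sup>*\<^sup>* a b"
proof -
  have "(\<lambda>u w. u \<in> C \<and> w \<in> C \<and> H u w)\<^sup>*\<^sup>* a b"
    using assms unfolding induces_connected_def by blast
  then show ?thesis
    by (rule rtranclp_mono[THEN predicate2D, rotated]) (use assms(2) in blast)
qed

lemma induces_connected_UN:
  assumes conn: "induces_connected H C"
    and conn_f: "\<And>p. p \<in> C \<Longrightarrow> induces_connected H' (f p)"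
    and lift: "\<And>a b. a \<in> C \<Longrightarrow> b \<in> C \<Longrightarrow> H a b \<Longrightarrow> \<exists>\<alpha>\<in>f a. \<exists>\<beta>\<in>f b. H' \<alpha> \<beta>"
  shows "induces_connected H' (\<Union>p\<in>C. f p)"
proof -
  let ?D = "\<Union>p\<in>C. f p"
  let ?R = "\<lambda>u w. u \<in> C \<and> w \<in> C \<and> H u w"
  let ?R' = "\<lambda>u w. u \<in> ?D \<and> w \<in> ?D \<and> H' u w"
  have within: "?R'\<^sup>*\<^sup>* \<alpha> \<beta>" if "p \<in> C" "\<alpha> \<in> f p" "\<beta> \<in> f p" for p \<alpha> \<beta>
    using induces_connected_mono[OF conn_f[OF \<open>p \<in> C\<close>]] that by blast
  have along: "\<forall>\<alpha>\<in>f a. \<forall>\<beta>\<in>f b. ?R'\<^sup>*\<^sup>* \<alpha> \<beta>" if "?R\<^sup>*\<^sup>* a b" "a \<in> C" for a b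
    using that(1)
  proof (induction rule: rtranclp_induct)
    case base
    then show ?case using within[OF \<open>a \<in> C\<close>] by blast
  next
    case (step b d)
    then have "b \<in> C" "d \<in> C" "H b d" by simp_all
    then obtain \<beta> \<delta> where \<beta>: "\<beta> \<in> f b" and \<delta>: "\<delta> \<in> f d" and "H' \<beta> \<delta>"
      using lift by blast
    then have "?R' \<beta> \<delta>" using \<open>b \<in> C\<close> \<open>d \<in> C\<close> by blast
    show ?case
    proof (intro ballI)
      fix \<alpha> \<gamma> assume "\<alpha> \<in> f a" "\<gamma> \<in> f d"
      have "?R'\<^sup>*\<^sup>* \<alpha> \<beta>" using step.IH \<open>\<alpha> \<in> f a\<close> \<beta> by blast
      also have "?R' \<beta> \<delta>" by fact
      also have "?R'\<^sup>*\<^sup>* \<delta> \<gamma>" using within[OF \<open>d \<in> C\<close> \<delta> \<open>\<gamma> \<in> f d\<close>] .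
      finally show "?R'\<^sup>*\<^sup>* \<alpha> \<gamma>" .
    qed
  qed
  show ?thesis unfolding induces_connected_def
  proof (intro ballI)
    fix \<alpha> \<beta> assume "\<alpha> \<in> ?D" "\<beta> \<in> ?D"
    then obtain a b where "a \<in> C" "\<alpha> \<in> f a" "b \<in> C" "\<beta> \<in> f b" by blast
    moreover have "?R\<^sup>*\<^sup>* a b" using conn \<open>a \<in> C\<close> \<open>b \<in> C\<close> unfolding induces_connected_def by blast
    ultimately show "?R'\<^sup>*\<^sup>* \<alpha> \<beta>" using along by blast
  qed
qed

lemma induces_connected_doubleton:
  assumes "H a b" "H b a"
  shows "induces_connected H {a, b}"
  unfolding induces_connected_def using assms by (auto intro: r_into_rtranclp)

lemma feasible_embedding_expand:
  assumes emb: "feasible_embedding VP EP S VH H \<phi>"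
    and into: "\<And>p. p \<in> VH \<Longrightarrow> f p \<subseteq> VH'"
    and nonempty: "\<And>p. f p \<noteq> {}"
    and disjoint: "\<And>p q. p \<noteq> q \<Longrightarrow> f p \<inter> f q = {}"
    and conn: "\<And>p. p \<in> VH \<Longrightarrow> induces_connected H' (f p)"
    and lift: "\<And>a b. H a b \<Longrightarrow> \<exists>\<alpha>\<in>f a. \<exists>\<beta>\<in>f b. H' \<alpha> \<beta>"
  shows "feasible_embedding VP EP S VH' H' (\<lambda>v. \<Union>p\<in>\<phi> v. f p)"
proof -
  from emb[unfolded feasible_embedding_def]
  have sub: "\<forall>v\<in>VP. \<phi> v \<subseteq> VH"
    and off: "\<forall>v\<in>VP. v \<notin> S \<longrightarrow> \<phi> v = {}"
    and on: "\<forall>v\<in>S. \<phi> v \<noteq> {}"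
    and disj: "\<forall>u\<in>VP. \<forall>v\<in>VP. u \<noteq> v \<longrightarrow> \<phi> u \<inter> \<phi> v = {}"
    and chains: "\<forall>v\<in>VP. induces_connected H (\<phi> v)"
    and edges: "\<forall>(u, v)\<in>EP. u \<in> S \<longrightarrow> v \<in> S \<longrightarrow> (\<exists>a\<in>\<phi> u. \<exists>b\<in>\<phi> v. H a b)"
    by blast+
  let ?\<psi> = "\<lambda>v. \<Union>p\<in>\<phi> v. f p"
  have "\<forall>v\<in>VP. ?\<psi> v \<subseteq> VH'"
    using into sub by blast
  moreover have "\<forall>v\<in>VP. v \<notin> S \<longrightarrow> ?\<psi> v = {}"
    using off by simp
  moreover have "\<forall>v\<in>S. ?\<psi> v \<noteq> {}"
    using on nonempty by blast
  moreover have "\<forall>u\<in>VP. \<forall>v\<in>VP. u \<noteq> v \<longrightarrow> ?\<psi> u \<inter> ?\<psi> v = {}"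
  proof (intro ballI impI)
    fix u v assume "u \<in> VP" "v \<in> VP" "u \<noteq> v"
    then have "\<phi> u \<inter> \<phi> v = {}" using disj by blast
    show "?\<psi> u \<inter> ?\<psi> v = {}"
    proof (rule equals0I)
      fix q assume "q \<in> ?\<psi> u \<inter> ?\<psi> v"
      then obtain p p' where "p \<in> \<phi> u" "p' \<in> \<phi> v" "q \<in> f p \<inter> f p'" by blast
      moreover from \<open>q \<in> f p \<inter> f p'\<close> have "p = p'" using disjoint by blast
      ultimately show False using \<open>\<phi> u \<inter> \<phi> v = {}\<close> by blast
    qed
  qed
  moreover have "\<forall>v\<in>VP. induces_connected H' (?\<psi> v)"
  proof
    fix v assume "v \<in> VP"
    show "induces_connected H' (?\<psi> v)"
      by (rule induces_connected_UN[where H = H]) (use chains conn lift sub \<open>v \<in> VP\<close> in blast)+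
  qed
  moreover have "\<forall>(u, v)\<in>EP. u \<in> S \<longrightarrow> v \<in> S \<longrightarrow> (\<exists>\<alpha>\<in>?\<psi> u. \<exists>\<beta>\<in>?\<psi> v. H' \<alpha> \<beta>)"
    using edges lift by fast
  ultimately show ?thesis unfolding feasible_embedding_def by (intro conjI)
qed

lemma sigma_subset_chimera_verts:
  "p \<in> chimera_verts n m c \<Longrightarrow> sigma c p \<subseteq> chimera_verts (2*n) (2*m) c"
  by (cases p) (simp add: sigma_def chimera_verts_def)

lemma sigma_nonempty: "sigma c p \<noteq> {}"
  by (cases p) (auto simp: sigma_def)

lemma sigma_disjoint: "p \<noteq> q \<Longrightarrow> sigma c p \<inter> sigma c q = {}"
  by (cases p; cases q) (auto simp: sigma_def split: if_splits)

lemma sigma_connected: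
  assumes "p \<in> chimera_verts n m c"
  shows "induces_connected (chimera_adj (2*n) (2*m) c) (sigma c p)"
proof -
  obtain x y z where p: "p = (x, y, z)" by (cases p)
  with assms have "x < n" "y < m" "z < 2*c" by (simp_all add: chimera_verts_def)
  then show ?thesis
    by (auto simp: p sigma_def chimera_adj_def chimera_edge0_def chimera_verts_def
        intro!: induces_connected_doubleton)
qed

lemma sigma_lifts_edge0:
  assumes "chimera_edge0 n m c a b"
  shows "\<exists>\<alpha>\<in>sigma c a. \<exists>\<beta>\<in>sigma c b. chimera_edge0 (2*n) (2*m) c \<alpha> \<beta>"
proof -
  obtain x y z x' y' z' where ab: "a = (x, y, z)" "b = (x', y', z')" by (cases a; cases b) auto
  from assms consider
      "x' = x" "y' = y" "z \<le> c - 1" "c - 1 < z'"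
    | "x' = x + 1" "y' = y" "z' = z" "z \<le> c - 1"
    | "x' = x" "y' = y + 1" "z' = z" "c \<le> z"
    unfolding ab chimera_edge0_def by auto
  then show ?thesis
  proof cases
    case 1
    then show ?thesis using assms
      by (intro bexI[of _ "(2*x, 2*y, z)"] bexI[of _ "(2*x, 2*y, z')"])
         (auto simp: ab sigma_def chimera_edge0_def chimera_verts_def)
  next
    case 2
    then show ?thesis using assms
      by (intro bexI[of _ "(2*x+1, 2*y, z)"] bexI[of _ "(2*x', 2*y, z)"])
         (auto simp: ab sigma_def chimera_edge0_def chimera_verts_def)
  next
    case 3
    then show ?thesis using assms
      by (intro bexI[of _ "(2*x, 2*y+1, z)"] bexI[of _ "(2*x, 2*y', z)"])
         (auto simp: ab sigma_def chimera_edge0_def chimera_verts_def)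
  qed
qed

lemma sigma_lifts_adj:
  "chimera_adj n m c a b \<Longrightarrow> \<exists>\<alpha>\<in>sigma c a. \<exists>\<beta>\<in>sigma c b. chimera_adj (2*n) (2*m) c \<alpha> \<beta>"
  unfolding chimera_adj_def by (blast dest: sigma_lifts_edge0)

theorem mainTheorem1:
  fixes n m c :: nat and VP :: "'v set" and EP :: "('v \<times> 'v) set" and S :: "'v set"
    and \<phi> :: "'v \<Rightarrow> cvert set"
  assumes "n \<ge> 1" and "m \<ge> 1" and "c \<ge> 1"
    and "EP \<subseteq> VP \<times> VP"
    and "S \<subseteq> VP"
    and "feasible_embedding VP EP S (chimera_verts n m c) (chimera_adj n m c) \<phi>"
  shows "feasible_embedding VP EP S (chimera_verts (2*n) (2*m) c) (chimera_adj (2*n) (2*m) c)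
           (phi_dagger c \<phi>)"
  unfolding phi_dagger_def
  using assms(6) sigma_subset_chimera_verts sigma_nonempty sigma_disjoint sigma_connected
    sigma_lifts_adj
  by (rule feasible_embedding_expand)

end
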